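(* Let $F$ be a subexponential distribution function whose hazard rate $h$ satisfies (H) and is regularly varying of negative index. Let $M>0$, let $K\in B(F,M)$, and let $m\ge0$ be an integer. If $g$ is a (measurable, locally bounded) function with $g(t)=o\big(h(t)^m\overline F(t)\big)$ as $t\to\infty$, then $$\mathsf T_Kg(t)=o\big(h(t)^m\overline F(t)\big)\qquad(t\to\infty).$$
   Context: For a distribution function $K$, $\overline K=1-K$, and $\mathsf M_{-1}K$ is the distribution of $-Y$ when $Y\sim K$. $F$ is subexponential if it is supported on $[0,\infty)$-tails in the sense $\overline{F\star F}(t)\sim2\overline F(t)$ as $t\to\infty$. The hazard rate is $h=F'/\overline F$, assumed to exist for all large $t$. Condition (H): $h$ is regularly varying, $\lim_{t\to\infty}th(t)=+\infty$, $\lim_{t\to\infty}h(t)=0$. For $M>0$, $B(F,M)$ is the set of distribution functions $K$ such that $\overline K(x)\le M\overline F(x)$ and $\overline{\mathsf M_{-1}K}(x)\le M\overline F(x)$ for all $x\ge0$. For a distribution function $K$, the operator $\mathsf T_K$ is defined by $\mathsf T_Kf(t)=\int_{-\infty}^{t/2}f(t-x)\,dK(x)$. *)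

theory Defs
  imports "HOL-Probability.Probability" "HOL-Library.Landau_Symbols"
begin

text \<open>Distribution functions are represented by real probability distributions K
  (locale real_distribution); the distribution function is cdf K, its tail is 1 - cdf K.\<close>

definition tail :: "real measure \<Rightarrow> real \<Rightarrow> real" where
  "tail K x = 1 - cdf K x"

definition reflect :: "real measure \<Rightarrow> real measure" where
  "reflect K = distr K borel uminus"

definition subexponential :: "real measure \<Rightarrow> bool" where
  "subexponential F \<longleftrightarrow> real_distribution F \<and> measure F {..<0} = 0 \<and>
     (\<lambda>t. tail (F \<star> F) t) \<sim>[at_top] (\<lambda>t. 2 * tail F t)"

definition hazard_rate :: "real measure \<Rightarrow> real \<Rightarrow> real" where
  "hazard_rate F t = deriv (cdf F) t / tail F t"

definition regularly_varying :: "(real \<Rightarrow> real) \<Rightarrow> real \<Rightarrow> bool" where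
  "regularly_varying f \<rho> \<longleftrightarrow>
     (\<exists>a. (\<lambda>x. f x * indicator {a..} x) \<in> borel_measurable borel) \<and>
     (\<forall>\<^sub>F x in at_top. f x > 0) \<and>
     (\<forall>c>0. ((\<lambda>x. f (c * x) / f x) \<longlongrightarrow> c powr \<rho>) at_top)"

definition cond_H :: "(real \<Rightarrow> real) \<Rightarrow> bool" where
  "cond_H h \<longleftrightarrow> (\<exists>\<rho>. regularly_varying h \<rho>) \<and>
     filterlim (\<lambda>t. t * h t) at_top at_top \<and> (h \<longlongrightarrow> 0) at_top"

definition B_class :: "real measure \<Rightarrow> real \<Rightarrow> real measure set" where
  "B_class F M = {K. real_distribution K \<and>
     (\<forall>x\<ge>0. tail K x \<le> M * tail F x) \<and> (\<forall>x\<ge>0. tail (reflect K) x \<le> M * tail F x)}"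

definition T_op :: "real measure \<Rightarrow> (real \<Rightarrow> real) \<Rightarrow> real \<Rightarrow> real" where
  "T_op K f t = (LINT x:{..t/2}|K. f (t - x))"

end

theory Submission
  imports Defs
begin

text \<open>A measurable regularly varying function h of negative index satisfies h s \<le> C * h t for
  s \<ge> t/2 and large t: in logarithmic coordinates k y = ln (h (exp y)) the increments
  k (y + u) - k y converge pointwise, a Steinhaus-type argument bounds them uniformly for
  u \<in> [0,1], and they are eventually negative for u = 1. Hence
  |g (t - x)| \<le> \<epsilon> * C^m * h t ^ m * tail F (t - x) for x \<le> t/2, and the integral of
  tail F (t - x) against K is the tail of K \<star> F, which the right-tail bound on K makes at most
  tail F t + M * tail (F \<star> F) t = O(tail F t). No other hypothesis is needed; in particular
  g need not be measurable, since the integral of a non-integrable function is 0.\<close>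

lemma fmeasurable_Int_not_empty:
  assumes "A \<in> fmeasurable M" "B \<in> fmeasurable M" "S \<in> fmeasurable M" "A \<union> B \<subseteq> S"
    and "measure M S < measure M A + measure M B"
  shows "A \<inter> B \<noteq> {}"
proof
  assume "A \<inter> B = {}"
  then have "measure M (A \<union> B) = measure M A + measure M B"
    using measure_Un3[OF assms(1,2)] by simp
  moreover have "measure M (A \<union> B) \<le> measure M S"
    using assms(1-4) by (intro measure_mono_fmeasurable) auto
  ultimately show False using assms(5) by linarith
qed

lemma tendsto_measure_increment_bounded_set:
  fixes k :: "real \<Rightarrow> real" and x :: "nat \<Rightarrow> real"
  assumes [measurable]: "k \<in> borel_measurable borel"
    and x: "filterlim x at_top sequentially" and "a \<le> b"
    and close: "\<And>u. u \<in> {a..b} \<Longrightarrow> \<forall>\<^sub>F y in at_top. \<bar>k (y + u) - k y\<bar> \<le> R"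
  shows "(\<lambda>n. measure lebesgue {u\<in>{a..b}. \<forall>m\<ge>n. \<bar>k (x m + u) - k (x m)\<bar> \<le> R}) \<longlonglongrightarrow> b - a"
proof -
  define G where "G n = {u\<in>{a..b}. \<forall>m\<ge>n. \<bar>k (x m + u) - k (x m)\<bar> \<le> R}" for n
  have "G n \<in> sets borel" for n unfolding G_def by measurable
  then have sets: "range G \<subseteq> sets lebesgue" by auto
  have "incseq G" unfolding incseq_def G_def by auto
  have "(\<Union>n. G n) = {a..b}"
  proof (intro equalityI subsetI)
    fix u assume u: "u \<in> {a..b}"
    have "\<forall>\<^sub>F n in sequentially. \<bar>k (x n + u) - k (x n)\<bar> \<le> R"
      using filterlim_iff[THEN iffD1, OF x, rule_format, OF close[OF u]] .
    then obtain N where "\<forall>m\<ge>N. \<bar>k (x m + u) - k (x m)\<bar> \<le> R"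
      unfolding eventually_sequentially by blast
    then show "u \<in> (\<Union>n. G n)" using u unfolding G_def by blast
  qed (auto simp: G_def)
  moreover have "emeasure lebesgue {a..b} \<noteq> \<infinity>" using \<open>a \<le> b\<close> by simp
  ultimately have "(\<lambda>n. measure lebesgue (G n)) \<longlonglongrightarrow> measure lebesgue {a..b}"
    using Lim_measure_incseq[OF sets \<open>incseq G\<close>] by simp
  then show ?thesis using \<open>a \<le> b\<close> unfolding G_def by simp
qed

lemma eventually_uniform_increment_bound:
  fixes k :: "real \<Rightarrow> real"
  assumes [measurable]: "k \<in> borel_measurable borel"
    and close: "\<And>u. u \<in> {0..2} \<Longrightarrow> \<forall>\<^sub>F y in at_top. \<bar>k (y + u) - k y\<bar> \<le> R"
  shows "\<forall>\<^sub>F y in at_top. \<forall>u\<in>{0..1}. \<bar>k (y + u) - k y\<bar> \<le> 2 * R"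
proof (rule ccontr)
  assume "\<not> ?thesis"
  then have "\<forall>n::nat. \<exists>y\<ge>real n. \<exists>u\<in>{0..1}. \<bar>k (y + u) - k y\<bar> > 2 * R"
    unfolding eventually_at_top_linorder by (auto simp: not_le)
  then obtain x v where x: "\<And>n. x n \<ge> real n" and v: "\<And>n. v n \<in> {0..1}"
    and far: "\<And>n. \<bar>k (x n + v n) - k (x n)\<bar> > 2 * R"
    by metis
  have x_lim: "filterlim x at_top sequentially"
    by (rule filterlim_at_top_mono[OF filterlim_real_sequentially]) (use x in auto)
  have xv_lim: "filterlim (\<lambda>n. x n + v n) at_top sequentially"
    by (rule filterlim_at_top_mono[OF filterlim_real_sequentially])
      (use x v in \<open>auto simp: add_increasing2\<close>)
  \<comment> \<open>The increments that are good from x n and those good from x n + v n, shifted by v n,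
    fill more than the measure of [0,2]; a common one bounds the increment v n by 2R.\<close>
  define U where "U n = {u\<in>{0..2}. \<forall>m\<ge>n. \<bar>k (x m + u) - k (x m)\<bar> \<le> R}" for n
  define V where "V n = {u\<in>{0..1}. \<forall>m\<ge>n. \<bar>k (x m + v m + u) - k (x m + v m)\<bar> \<le> R}" for n
  have "(\<lambda>n. measure lebesgue (U n)) \<longlonglongrightarrow> 2"
    using tendsto_measure_increment_bounded_set[OF _ x_lim, of k 0 2] close
    unfolding U_def by simp
  then have "\<forall>\<^sub>F n in sequentially. measure lebesgue (U n) > 3/2"
    by (rule order_tendstoD) simp
  moreover have "(\<lambda>n. measure lebesgue (V n)) \<longlonglongrightarrow> 1"
    using tendsto_measure_increment_bounded_set[OF _ xv_lim, of k 0 1] close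
    unfolding V_def by simp
  then have "\<forall>\<^sub>F n in sequentially. measure lebesgue (V n) > 1/2"
    by (rule order_tendstoD) simp
  ultimately obtain n where U_big: "measure lebesgue (U n) > 3/2"
    and V_big: "measure lebesgue (V n) > 1/2"
    using eventually_happens'[OF sequentially_bot] eventually_conj by blast
  have "U n \<in> lmeasurable"
    by (rule fmeasurableI2[of "{0..2}"]) (auto simp: U_def)
  moreover have "V n \<in> lmeasurable"
    by (rule fmeasurableI2[of "{0..1}"]) (auto simp: V_def)
  moreover have "U n \<union> (+) (v n) ` V n \<subseteq> {0..2}"
    using v[of n] by (auto simp: U_def V_def)
  ultimately have "U n \<inter> (+) (v n) ` V n \<noteq> {}"
    using U_big V_big
    by (intro fmeasurable_Int_not_empty) (auto simp: measure_translation intro: measurable_translation)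
  then obtain w where w: "w \<in> V n" and vw: "v n + w \<in> U n" by auto
  have "\<bar>k (x n + v n + w) - k (x n)\<bar> \<le> R" using vw unfolding U_def by (auto simp: add.assoc)
  moreover have "\<bar>k (x n + v n + w) - k (x n + v n)\<bar> \<le> R" using w unfolding V_def by auto
  ultimately show False using far[of n] by linarith
qed

lemma eventually_increment_bounded_above:
  fixes k :: "real \<Rightarrow> real"
  assumes [measurable]: "k \<in> borel_measurable borel"
    and lim: "\<And>u. ((\<lambda>y. k (y + u) - k y) \<longlongrightarrow> \<rho> * u) at_top" and "\<rho> < 0"
  shows "\<exists>R. \<forall>\<^sub>F y in at_top. \<forall>v\<ge>-1. k (y + v) \<le> k y + R"
proof -
  define R where "R = 2 * \<bar>\<rho>\<bar> + 1"
  have "\<forall>\<^sub>F y in at_top. \<bar>k (y + u) - k y\<bar> \<le> R" if u: "u \<in> {0..2}" for u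
  proof -
    have "\<bar>\<rho> * u\<bar> \<le> \<bar>\<rho>\<bar> * 2" using u by (simp add: abs_mult mult_left_mono)
    then have "\<bar>d - \<rho> * u\<bar> < 1 \<Longrightarrow> \<bar>d\<bar> \<le> R" for d unfolding R_def by linarith
    moreover have "\<forall>\<^sub>F y in at_top. \<bar>(k (y + u) - k y) - \<rho> * u\<bar> < 1"
      using lim[of u] unfolding tendsto_iff dist_real_def by simp
    ultimately show ?thesis by (simp add: eventually_mono)
  qed
  then have "\<forall>\<^sub>F y in at_top. \<forall>u\<in>{0..1}. \<bar>k (y + u) - k y\<bar> \<le> 2 * R"
    by (intro eventually_uniform_increment_bound) auto
  moreover have "\<forall>\<^sub>F y in at_top. k (y + 1) < k y"
    using order_tendstoD(2)[OF lim[of 1], of 0] \<open>\<rho> < 0\<close> by simp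
  ultimately have "\<forall>\<^sub>F y in at_top. (\<forall>u\<in>{0..1}. \<bar>k (y + u) - k y\<bar> \<le> 2 * R) \<and> k (y + 1) < k y"
    by (rule eventually_conj)
  then obtain Y where Y: "\<And>y. y \<ge> Y \<Longrightarrow> (\<forall>u\<in>{0..1}. \<bar>k (y + u) - k y\<bar> \<le> 2 * R) \<and> k (y + 1) < k y"
    unfolding eventually_at_top_linorder by blast
  then have osc: "\<And>y u. y \<ge> Y \<Longrightarrow> u \<in> {0..1} \<Longrightarrow> \<bar>k (y + u) - k y\<bar> \<le> 2 * R"
    and step: "\<And>y. y \<ge> Y \<Longrightarrow> k (y + 1) < k y"
    by auto
  have descent: "k (z + real n) \<le> k z" if "z \<ge> Y" for z n
  proof (induction n)
    case (Suc n)
    have "k (z + real n + 1) < k (z + real n)" using step[of "z + real n"] that by simp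
    moreover have "z + real (Suc n) = z + real n + 1" by simp
    ultimately show ?case using Suc by (metis less_imp_le order_trans)
  qed simp
  have "k (y + v) \<le> k y + 4 * R" if y: "y \<ge> Y + 1" and v: "v \<ge> -1" for y v
  proof -
    define n where "n = nat \<lfloor>v + 1\<rfloor>"
    define u where "u = v + 1 - real n"
    have u: "u \<in> {0..1}"
      using v frac_lt_1[of "v + 1"] frac_ge_0[of "v + 1"] by (auto simp: u_def n_def frac_def)
    have "k (y + v) = k (y - 1 + u + real n)" by (simp add: u_def)
    also have "\<dots> \<le> k (y - 1 + u)" using y u by (intro descent) auto
    also have "\<dots> \<le> k (y - 1) + 2 * R" using osc[of "y - 1" u] y u by auto
    also have "\<dots> \<le> k y + 4 * R" using osc[of "y - 1" 1] y by auto
    finally show ?thesis .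
  qed
  then show ?thesis unfolding eventually_at_top_linorder by blast
qed

lemma tendsto_ln_exp_increment:
  fixes f :: "real \<Rightarrow> real"
  assumes pos: "\<forall>\<^sub>F x in at_top. f x > 0"
    and lim: "((\<lambda>x. f (exp u * x) / f x) \<longlongrightarrow> exp u powr \<rho>) at_top"
  shows "((\<lambda>y. ln (f (exp (y + u))) - ln (f (exp y))) \<longlongrightarrow> \<rho> * u) at_top"
proof -
  have "((\<lambda>y. f (exp u * exp y) / f (exp y)) \<longlongrightarrow> exp (\<rho> * u)) at_top"
    using filterlim_compose[OF lim exp_at_top] by (simp add: powr_def mult.commute)
  then have "((\<lambda>y. ln (f (exp u * exp y) / f (exp y))) \<longlongrightarrow> \<rho> * u) at_top"
    using tendsto_ln[of _ "exp (\<rho> * u)"] by fastforce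
  moreover obtain Y where Y: "\<And>y. y \<ge> Y \<Longrightarrow> f (exp y) > 0"
    using filterlim_iff[THEN iffD1, OF exp_at_top, rule_format, OF pos]
    unfolding eventually_at_top_linorder by blast
  have "\<forall>\<^sub>F y in at_top.
      ln (f (exp u * exp y) / f (exp y)) = ln (f (exp (y + u))) - ln (f (exp y))"
    using eventually_ge_at_top[of Y] eventually_ge_at_top[of "Y - u"]
  proof eventually_elim
    case (elim y)
    then show ?case using Y[of y] Y[of "y + u"] by (simp add: ln_div exp_add mult.commute)
  qed
  ultimately show ?thesis by (rule Lim_transform_eventually)
qed

lemma regularly_varying_ln_exp_increments:
  fixes f :: "real \<Rightarrow> real"
  assumes "regularly_varying f \<rho>"
  obtains k b where "k \<in> borel_measurable borel"
    and "\<And>u. ((\<lambda>y. k (y + u) - k y) \<longlongrightarrow> \<rho> * u) at_top"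
    and "\<And>y. y \<ge> b \<Longrightarrow> f (exp y) > 0 \<and> k y = ln (f (exp y))"
proof -
  obtain a where meas: "(\<lambda>x. f x * indicator {a..} x) \<in> borel_measurable borel"
    and pos: "\<forall>\<^sub>F x in at_top. f x > 0"
    and lim: "\<And>c. c > 0 \<Longrightarrow> ((\<lambda>x. f (c * x) / f x) \<longlongrightarrow> c powr \<rho>) at_top"
    using assms unfolding regularly_varying_def by blast
  obtain c where c: "\<And>x. x \<ge> c \<Longrightarrow> f x > 0 \<and> x \<ge> a \<and> x > 0"
    using eventually_conj[OF pos eventually_conj[OF eventually_ge_at_top[of a] eventually_gt_at_top[of 0]]]
    unfolding eventually_at_top_linorder by blast
  \<comment> \<open>Only the restriction of f to [a, \<infinity>) is known to be measurable.\<close>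
  define k where "k y = ln (f (exp y) * indicator {a..} (exp y))" for y
  have k_eq: "f (exp y) > 0 \<and> k y = ln (f (exp y))" if "y \<ge> ln c" for y
  proof -
    have "exp y \<ge> c" using that c[of c] by (metis exp_le_cancel_iff exp_ln order.refl)
    then show ?thesis using c by (auto simp: k_def)
  qed
  have "k \<in> borel_measurable borel"
    unfolding k_def using measurable_compose[OF borel_measurable_exp meas] by measurable
  moreover have "((\<lambda>y. k (y + u) - k y) \<longlongrightarrow> \<rho> * u) at_top" for u
  proof (rule Lim_transform_eventually)
    show "((\<lambda>y. ln (f (exp (y + u))) - ln (f (exp y))) \<longlongrightarrow> \<rho> * u) at_top"
      by (rule tendsto_ln_exp_increment[OF pos lim]) simp
    show "\<forall>\<^sub>F y in at_top. ln (f (exp (y + u))) - ln (f (exp y)) = k (y + u) - k y"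
      using eventually_ge_at_top[of "ln c"] eventually_ge_at_top[of "ln c - u"]
      by eventually_elim (simp add: k_eq)
  qed
  ultimately show ?thesis using k_eq that by blast
qed

lemma regularly_varying_neg_bound:
  fixes f :: "real \<Rightarrow> real"
  assumes "regularly_varying f \<rho>" and "\<rho> < 0"
  shows "\<exists>C. \<forall>\<^sub>F t in at_top. \<forall>s\<ge>t/2. 0 < f s \<and> f s \<le> C * f t"
proof -
  obtain k b where "k \<in> borel_measurable borel"
    and "\<And>u. ((\<lambda>y. k (y + u) - k y) \<longlongrightarrow> \<rho> * u) at_top"
    and k_eq: "\<And>y. y \<ge> b \<Longrightarrow> f (exp y) > 0 \<and> k y = ln (f (exp y))"
    using regularly_varying_ln_exp_increments[OF assms(1)] by blast
  then obtain R where "\<forall>\<^sub>F y in at_top. \<forall>v\<ge>-1. k (y + v) \<le> k y + R"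
    using eventually_increment_bounded_above \<open>\<rho> < 0\<close> by blast
  then obtain Y where Y: "\<And>y v. y \<ge> Y \<Longrightarrow> v \<ge> -1 \<Longrightarrow> k (y + v) \<le> k y + R"
    unfolding eventually_at_top_linorder by blast
  have "f s \<le> exp R * f t \<and> 0 < f s" if t: "t \<ge> exp (max Y b + 1)" and s: "s \<ge> t / 2" for t s
  proof -
    have "t > 0" using t by (meson exp_gt_zero less_le_trans)
    then have ln_t: "ln t \<ge> max Y b + 1" using t by (metis exp_le_cancel_iff exp_ln)
    have "s > 0" using s \<open>t > 0\<close> by simp
    have "ln (t / 2) \<le> ln s" using s \<open>t > 0\<close> by simp
    then have ln_s: "ln s \<ge> ln t - 1" using \<open>t > 0\<close> ln_2_less_1 by (simp add: ln_div)
    have "k (ln t + (ln s - ln t)) \<le> k (ln t) + R" using ln_t ln_s by (intro Y) auto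
    then have "ln (f s) \<le> ln (f t) + R" and "f s > 0" "f t > 0"
      using k_eq[of "ln s"] k_eq[of "ln t"] ln_t ln_s \<open>t > 0\<close> \<open>s > 0\<close> by auto
    then show ?thesis by (metis exp_add exp_le_cancel_iff exp_ln mult.commute)
  qed
  then show ?thesis unfolding eventually_at_top_linorder by blast
qed

lemma regularly_varying_neg_power_bound:
  fixes f :: "real \<Rightarrow> real"
  assumes "regularly_varying f \<rho>" and "\<rho> < 0"
  shows "\<exists>C. \<forall>\<^sub>F t in at_top. \<forall>s\<ge>t/2. norm (f s ^ m) \<le> C * norm (f t ^ m)"
proof -
  obtain C where "\<forall>\<^sub>F t in at_top. \<forall>s\<ge>t/2. 0 < f s \<and> f s \<le> C * f t"
    using regularly_varying_neg_bound[OF assms] by blast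
  then have "\<forall>\<^sub>F t in at_top. \<forall>s\<ge>t/2. norm (f s ^ m) \<le> C ^ m * norm (f t ^ m)"
    using eventually_ge_at_top[of 0]
  proof eventually_elim
    case (elim t)
    then have "f t > 0" by auto
    show ?case
    proof (intro allI impI)
      fix s assume "s \<ge> t / 2"
      then have "0 < f s" "f s \<le> C * f t" using elim by auto
      then show "norm (f s ^ m) \<le> C ^ m * norm (f t ^ m)"
        using \<open>f t > 0\<close> by (simp add: power_abs power_mult_distrib[symmetric] power_mono)
    qed
  qed
  then show ?thesis by blast
qed

lemma tail_nonneg: "real_distribution P \<Longrightarrow> tail P x \<ge> 0"
  by (simp add: tail_def real_distribution.cdf_bounded_prob)

lemma borel_measurable_tail:
  assumes "real_distribution P"
  shows "tail P \<in> borel_measurable borel"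
proof -
  interpret P: real_distribution P by fact
  have "mono (cdf P)" by (simp add: mono_def P.cdf_nondecreasing)
  then show ?thesis
    unfolding tail_def by (intro borel_measurable_diff borel_measurable_const borel_measurable_mono)
qed

lemma emeasure_greaterThan_eq_tail:
  assumes "real_distribution P"
  shows "emeasure P {x<..} = ennreal (tail P x)"
proof -
  interpret P: real_distribution P by fact
  have "{x<..} = space P - {..x}" by auto
  then show ?thesis
    using P.prob_compl[of "{..x}"] by (simp add: tail_def cdf_def P.emeasure_eq_measure)
qed

lemma real_distribution_convolution:
  assumes "real_distribution P" "real_distribution Q"
  shows "real_distribution (P \<star> Q)"
proof -
  interpret P: real_distribution P by fact
  interpret Q: real_distribution Q by fact
  interpret PQ: pair_prob_space P Q ..
  have "prob_space (P \<star> Q)"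
    unfolding convolution_def by (rule PQ.prob_space_distr) simp
  then show ?thesis by (simp add: real_distribution_def real_distribution_axioms_def)
qed

lemma nn_integral_tail_shift:
  assumes P: "real_distribution P" and Q: "real_distribution Q"
  shows "(\<integral>\<^sup>+x. ennreal (tail P (t - x)) \<partial>Q) = ennreal (tail (Q \<star> P) t)"
proof -
  interpret P: real_distribution P by fact
  interpret Q: real_distribution Q by fact
  have "{a. a + x \<in> {t<..}} = {t - x<..}" for x by auto
  then have "(\<integral>\<^sup>+x. ennreal (tail P (t - x)) \<partial>Q) = (\<integral>\<^sup>+x. emeasure P {a. a + x \<in> {t<..}} \<partial>Q)"
    by (simp add: emeasure_greaterThan_eq_tail[OF P])
  also have "\<dots> = emeasure (Q \<star> P) {t<..}"
    by (rule convolution_emeasure[symmetric])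
      (auto intro: P.finite_measure_axioms Q.finite_measure_axioms)
  finally show ?thesis
    by (simp add: emeasure_greaterThan_eq_tail[OF real_distribution_convolution[OF Q P]])
qed

lemma tail_convolution_le:
  assumes F: "real_distribution F" and K: "real_distribution K" and "M \<ge> 0"
    and K_tail: "\<forall>x\<ge>0. tail K x \<le> M * tail F x"
  shows "tail (K \<star> F) t \<le> tail F t + M * tail (F \<star> F) t"
proof -
  interpret F: real_distribution F by fact
  interpret K: real_distribution K by fact
  have "ennreal (tail K (t - y)) \<le> indicator {t<..} y + ennreal M * ennreal (tail F (t - y))" for y
  proof (cases "y > t")
    case True
    have "tail K (t - y) \<le> 1" using K.cdf_nonneg[of "t - y"] by (simp add: tail_def)
    then show ?thesis using True by (simp add: add_increasing2)
  next
    case False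
    then show ?thesis
      using K_tail \<open>M \<ge> 0\<close> tail_nonneg[OF F] by (simp add: ennreal_mult'[symmetric] ennreal_leI)
  qed
  then have "(\<integral>\<^sup>+y. ennreal (tail K (t - y)) \<partial>F)
      \<le> (\<integral>\<^sup>+y. indicator {t<..} y + ennreal M * ennreal (tail F (t - y)) \<partial>F)"
    by (intro nn_integral_mono)
  also have "\<dots> = emeasure F {t<..} + ennreal M * (\<integral>\<^sup>+y. ennreal (tail F (t - y)) \<partial>F)"
    using borel_measurable_tail[OF F]
    by (subst nn_integral_add) (auto simp: nn_integral_cmult)
  finally have "ennreal (tail (F \<star> K) t) \<le> ennreal (tail F t) + ennreal M * ennreal (tail (F \<star> F) t)"
    by (simp add: nn_integral_tail_shift F K emeasure_greaterThan_eq_tail)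
  also have "\<dots> = ennreal (tail F t + M * tail (F \<star> F) t)"
    using \<open>M \<ge> 0\<close> tail_nonneg[OF F] tail_nonneg[OF real_distribution_convolution[OF F F]]
    by (simp add: ennreal_mult ennreal_plus)
  finally have "tail (F \<star> K) t \<le> tail F t + M * tail (F \<star> F) t"
    using \<open>M \<ge> 0\<close> tail_nonneg[OF F] tail_nonneg[OF real_distribution_convolution[OF F F]]
    by (subst (asm) ennreal_le_iff) auto
  moreover have "(F \<star> K) = (K \<star> F)"
    by (intro convolution_commutative) (auto intro: F.finite_measure_axioms K.finite_measure_axioms)
  ultimately show ?thesis by simp
qed

lemma norm_T_op_le:
  assumes F: "real_distribution F" and K: "real_distribution K" and "M \<ge> 0"
    and K_tail: "\<forall>x\<ge>0. tail K x \<le> M * tail F x"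
    and "A \<ge> 0" and g_le: "\<And>s. s \<ge> t / 2 \<Longrightarrow> norm (g s) \<le> A * tail F s"
  shows "norm (T_op K g t) \<le> A * (tail F t + M * tail (F \<star> F) t)"
proof -
  interpret K: real_distribution K by fact
  have [measurable]: "tail F \<in> borel_measurable borel" by (rule borel_measurable_tail[OF F])
  have tail_shift_meas: "(\<lambda>x. tail F (t - x)) \<in> borel_measurable K"
    by (subst measurable_cong_sets[OF K.events_eq_borel refl]) measurable
  let ?G = "\<lambda>x. indicator {..t/2} x *\<^sub>R g (t - x)"
  have G_le: "norm (?G x) \<le> A * tail F (t - x)" for x
    using g_le[of "t - x"] \<open>A \<ge> 0\<close> tail_nonneg[OF F] by (cases "x \<le> t / 2") auto
  have "ennreal (norm (T_op K g t)) \<le> (\<integral>\<^sup>+x. ennreal (A * tail F (t - x)) \<partial>K)"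
  proof (cases "integrable K ?G")
    case True
    have "ennreal (norm (T_op K g t)) \<le> (\<integral>\<^sup>+x. ennreal (norm (?G x)) \<partial>K)"
      unfolding T_op_def set_lebesgue_integral_def by (rule integral_norm_bound_ennreal[OF True])
    also have "\<dots> \<le> (\<integral>\<^sup>+x. ennreal (A * tail F (t - x)) \<partial>K)"
      using G_le by (intro nn_integral_mono ennreal_leI)
    finally show ?thesis .
  qed (simp add: T_op_def set_lebesgue_integral_def not_integrable_integral_eq)
  also have "\<dots> = ennreal A * (\<integral>\<^sup>+x. ennreal (tail F (t - x)) \<partial>K)"
    using \<open>A \<ge> 0\<close> tail_nonneg[OF F] tail_shift_meas
    by (subst nn_integral_cmult[symmetric]) (auto simp: ennreal_mult)
  also have "\<dots> = ennreal (A * tail (K \<star> F) t)"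
    using \<open>A \<ge> 0\<close> by (simp add: nn_integral_tail_shift F K ennreal_mult')
  finally have "norm (T_op K g t) \<le> A * tail (K \<star> F) t"
    using \<open>A \<ge> 0\<close> tail_nonneg[OF real_distribution_convolution[OF K F]]
    by (subst (asm) ennreal_le_iff) auto
  also have "\<dots> \<le> A * (tail F t + M * tail (F \<star> F) t)"
    using tail_convolution_le[OF F K \<open>M \<ge> 0\<close> K_tail] \<open>A \<ge> 0\<close> by (rule mult_left_mono)
  finally show ?thesis .
qed

lemma T_op_smallo:
  fixes \<phi> g :: "real \<Rightarrow> real"
  assumes F: "real_distribution F" and FF: "tail (F \<star> F) \<in> O[at_top](tail F)"
    and K: "real_distribution K" and "M \<ge> 0" and K_tail: "\<forall>x\<ge>0. tail K x \<le> M * tail F x"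
    and \<phi>: "\<forall>\<^sub>F t in at_top. \<forall>s\<ge>t/2. norm (\<phi> s) \<le> C * norm (\<phi> t)"
    and g: "g \<in> o[at_top](\<lambda>t. \<phi> t * tail F t)"
  shows "T_op K g \<in> o[at_top](\<lambda>t. \<phi> t * tail F t)"
proof (rule landau_o.smallI)
  fix c :: real assume "c > 0"
  obtain c' where "c' > 0" and FF_le: "\<forall>\<^sub>F t in at_top. norm (tail (F \<star> F) t) \<le> c' * norm (tail F t)"
    using landau_o.bigE[OF FF] by blast
  define D where "D = max C 1 * (1 + M * c')"
  define \<epsilon> where "\<epsilon> = c / D"
  have "1 + M * c' > 0" using \<open>M \<ge> 0\<close> \<open>c' > 0\<close> by (simp add: add_pos_nonneg)
  then have "D > 0" by (simp add: D_def)
  then have "\<epsilon> > 0" using \<open>c > 0\<close> by (simp add: \<epsilon>_def)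
  obtain T where T: "\<And>s. s \<ge> T \<Longrightarrow> norm (g s) \<le> \<epsilon> * norm (\<phi> s * tail F s)"
    using landau_o.smallD[OF g \<open>\<epsilon> > 0\<close>] unfolding eventually_at_top_linorder by blast
  show "\<forall>\<^sub>F t in at_top. norm (T_op K g t) \<le> c * norm (\<phi> t * tail F t)"
    using \<phi> FF_le eventually_ge_at_top[of "2 * T"]
  proof eventually_elim
    case (elim t)
    let ?A = "\<epsilon> * max C 1 * norm (\<phi> t)"
    have "norm (g s) \<le> ?A * tail F s" if "s \<ge> t / 2" for s
    proof -
      have "norm (g s) \<le> \<epsilon> * (norm (\<phi> s) * tail F s)"
        using T[of s] that elim(3) tail_nonneg[OF F] by (simp add: abs_mult)
      also have "\<dots> \<le> \<epsilon> * (max C 1 * norm (\<phi> t) * tail F s)"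
        using elim(1) that \<open>\<epsilon> > 0\<close> tail_nonneg[OF F]
        by (intro mult_left_mono mult_right_mono order_trans[OF _ mult_right_mono[of C "max C 1"]]) auto
      finally show ?thesis by (simp add: mult.assoc)
    qed
    then have "norm (T_op K g t) \<le> ?A * (tail F t + M * tail (F \<star> F) t)"
      using \<open>\<epsilon> > 0\<close> by (intro norm_T_op_le[OF F K \<open>M \<ge> 0\<close> K_tail]) auto
    also have "\<dots> \<le> ?A * ((1 + M * c') * tail F t)"
      using elim(2) \<open>M \<ge> 0\<close> \<open>\<epsilon> > 0\<close> tail_nonneg[OF F] tail_nonneg[OF real_distribution_convolution[OF F F]]
      by (intro mult_left_mono) (auto simp: algebra_simps intro: mult_left_mono)
    also have "\<dots> = c * norm (\<phi> t * tail F t)"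
      using \<open>1 + M * c' > 0\<close> tail_nonneg[OF F] by (simp add: \<epsilon>_def D_def abs_mult)
    finally show ?case .
  qed
qed

theorem lemma4p2p2:
  fixes F K :: "real measure" and M \<rho> :: real and m :: nat and g :: "real \<Rightarrow> real"
  assumes subexp: "subexponential F"
    and deriv_ex: "\<forall>\<^sub>F t in at_top. cdf F differentiable at t"
    and H: "cond_H (hazard_rate F)"
    and rv: "regularly_varying (hazard_rate F) \<rho>" and neg: "\<rho> < 0"
    and Mpos: "M > 0"
    and KB: "K \<in> B_class F M"
    and g_meas: "g \<in> borel_measurable borel"
    and g_locbdd: "\<And>S. compact S \<Longrightarrow> bounded (g ` S)"
    and g_small: "g \<in> o[at_top](\<lambda>t. hazard_rate F t ^ m * tail F t)"
  shows "T_op K g \<in> o[at_top](\<lambda>t. hazard_rate F t ^ m * tail F t)"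
proof -
  have F: "real_distribution F" using subexp by (simp add: subexponential_def)
  have K: "real_distribution K" and K_tail: "\<forall>x\<ge>0. tail K x \<le> M * tail F x"
    using KB by (simp_all add: B_class_def)
  have "tail (F \<star> F) \<in> O[at_top](\<lambda>t. 2 * tail F t)"
    using subexp unfolding subexponential_def by (blast intro: asymp_equiv_imp_bigo)
  then have FF: "tail (F \<star> F) \<in> O[at_top](tail F)" by simp
  obtain C where "\<forall>\<^sub>F t in at_top. \<forall>s\<ge>t/2.
      norm (hazard_rate F s ^ m) \<le> C * norm (hazard_rate F t ^ m)"
    using regularly_varying_neg_power_bound[OF rv neg] by blast
  then show ?thesis
    using T_op_smallo[OF F FF K less_imp_le[OF Mpos] K_tail _ g_small] by blast
qed

end
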